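(* If $(a,b)\in R_0$, then $J(a,b)\ge 1/5$.
   Context: For $(a,b)\in\mathbb R^2$ define $f_{a,b}(x_1,x_2)=[b+a(x_1+x_2)+x_1x_2](2-x_1-x_2)$. Let $X_1=\{(x_1,x_2):-1\le x_1\le 0,\ -x_1\le x_2\le 1\}$ and $X_2=\{(x_1,x_2):-1\le x_1\le0,\ x_1\le x_2\le -x_1\}$. Let $\chi_{a,b}=\max_{X_1\cup X_2}f_{a,b}$, $m_{a,b}=\min_{X_1\cup X_2}f_{a,b}$, $R=\{(a,b)\in\mathbb R^2: m_{a,b}>0\}$, and for $(a,b)\in R$ let $J(a,b)=\frac{\chi_{a,b}-m_{a,b}}{\chi_{a,b}+m_{a,b}}$. Let $R_0=\{(a,b)\in R: b\le 2a\}$. *)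

theory Defs
  imports "HOL-Analysis.Analysis"
begin

definition f_ab :: "real \<Rightarrow> real \<Rightarrow> real \<times> real \<Rightarrow> real" where
  "f_ab a b p = (b + a * (fst p + snd p) + fst p * snd p) * (2 - fst p - snd p)"

definition X1 :: "(real \<times> real) set" where
  "X1 = {(x1, x2). -1 \<le> x1 \<and> x1 \<le> 0 \<and> -x1 \<le> x2 \<and> x2 \<le> 1}"

definition X2 :: "(real \<times> real) set" where
  "X2 = {(x1, x2). -1 \<le> x1 \<and> x1 \<le> 0 \<and> x1 \<le> x2 \<and> x2 \<le> -x1}"

text \<open>Maximum and minimum of f over the compact set X1 union X2 (attained, so Sup/Inf = max/min).\<close>
definition chi :: "real \<Rightarrow> real \<Rightarrow> real" where
  "chi a b = (SUP p\<in>X1 \<union> X2. f_ab a b p)"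

definition m_ab :: "real \<Rightarrow> real \<Rightarrow> real" where
  "m_ab a b = (INF p\<in>X1 \<union> X2. f_ab a b p)"

definition R :: "(real \<times> real) set" where
  "R = {(a, b). m_ab a b > 0}"

definition J :: "real \<Rightarrow> real \<Rightarrow> real" where
  "J a b = (chi a b - m_ab a b) / (chi a b + m_ab a b)"

definition R0 :: "(real \<times> real) set" where
  "R0 = {(a, b). (a, b) \<in> R \<and> b \<le> 2 * a}"

end

theory Submission
  imports Defs
begin

text \<open>Comparing f at the three corners (0,0), (-1,1), (-1,-1) of the domain suffices:
  chi \<ge> f(0,0) = 2b, while m \<le> f(-1,1) = 2(b - 1) and m \<le> f(-1,-1) = 4(b - 2a + 1) \<le> 4
  when b \<le> 2a. Either bound gives 3m \<le> 2 chi, according as b \<le> 3 or b > 3, and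
  3m \<le> 2 chi is exactly J \<ge> 1/5.\<close>

lemma X1_X2_subset_unit_box: "X1 \<union> X2 \<subseteq> cbox (-1, -1) (1, 1)"
  by (auto simp: X1_def X2_def cbox_Pair_eq)

lemma continuous_on_f_ab: "continuous_on S (f_ab a b)"
  unfolding f_ab_def by (intro continuous_intros)

lemma bounded_f_ab_image: "bounded (f_ab a b ` (X1 \<union> X2))"
proof -
  have "compact (f_ab a b ` cbox (-1, -1) (1, 1))"
    by (intro compact_continuous_image continuous_on_f_ab compact_cbox)
  then show ?thesis
    by (rule bounded_subset[OF compact_imp_bounded]) (use X1_X2_subset_unit_box in blast)
qed

lemma f_ab_le_chi: "p \<in> X1 \<union> X2 \<Longrightarrow> f_ab a b p \<le> chi a b"
  unfolding chi_def by (intro cSUP_upper bounded_imp_bdd_above bounded_f_ab_image)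

lemma m_ab_le_f_ab: "p \<in> X1 \<union> X2 \<Longrightarrow> m_ab a b \<le> f_ab a b p"
  unfolding m_ab_def by (intro cINF_lower bounded_imp_bdd_below bounded_f_ab_image)

lemma three_m_ab_le_two_chi:
  assumes "b \<le> 2 * a"
  shows "3 * m_ab a b \<le> 2 * chi a b"
proof -
  have "2 * b \<le> chi a b"
    using f_ab_le_chi[of "(0, 0)" a b] by (simp add: X1_def X2_def f_ab_def)
  moreover have "m_ab a b \<le> 2 * b - 2"
    using m_ab_le_f_ab[of "(-1, 1)" a b] by (simp add: X1_def X2_def f_ab_def)
  moreover have "m_ab a b \<le> 4 * b - 8 * a + 4"
    using m_ab_le_f_ab[of "(-1, -1)" a b] by (simp add: X1_def X2_def f_ab_def)
  ultimately show ?thesis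
    using assms by (cases "b \<le> 3"; linarith)
qed

lemma ratio_ge_one_fifth:
  fixes M m :: real
  assumes "0 < m" and "3 * m \<le> 2 * M"
  shows "1 / 5 \<le> (M - m) / (M + m)"
proof -
  have "0 < M + m" using assms by linarith
  then show ?thesis using assms(2) by (simp add: field_simps)
qed

theorem propositionA2:
  fixes a b :: real
  assumes "(a, b) \<in> R0"
  shows "J a b \<ge> 1 / 5"
proof -
  have "0 < m_ab a b" and "b \<le> 2 * a"
    using assms by (auto simp: R0_def R_def)
  then show ?thesis
    unfolding J_def by (intro ratio_ge_one_fifth three_m_ab_le_two_chi)
qed

end
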